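(* For all integers $n\ge 1$, $0\le t\le n$ and $k\ge 1$, \[ \frac{\binom{n}{t}}{S(n,t,k)}\;\le\; F(n,t,k)\;\le\;\left\lceil \frac{\binom nt}{S^{+}(n,t,k)}\cdot n\right\rceil. \]
   Context: A CNF formula over variables $x_1,\dots,x_n$ is a conjunction of clauses (disjunctions of literals); a $k$-CNF has all clauses of width at most $k$; it is monotone if all literals are un-negated variables. $\mathrm{THR}_t:\{0,1\}^n\to\{0,1\}$ is defined by $\mathrm{THR}_t(x)=1$ iff $\sum_i x_i\ge t$. $\mathrm{sat}_t(F)$ is the set of satisfying assignments of $F$ of Hamming weight exactly $t$. $F$ is $t$-admissible if it has no satisfying assignment of Hamming weight less than $t$. $S(n,t,k)$ (resp. $S^+(n,t,k)$) is the maximum of $|\mathrm{sat}_t(F)|$ over all $t$-admissible $k$-CNF (resp. monotone $k$-CNF) formulas $F$ on $n$ variables. $F(n,t,k)$ is the smallest $q$ such that $\mathrm{THR}_t=\bigvee_{i=1}^q\psi_i$ as Boolean functions on $\{0,1\}^n$ for some $k$-CNF formulas $\psi_1,\dots,\psi_q$ on $x_1,\dots,x_n$. *)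

theory Defs
  imports Complex_Main
begin

text \<open>Variables x_1..x_n are represented by indices 0..<n. A literal is a pair (i, b):
  (i, True) is x_i, (i, False) is its negation. An assignment in {0,1}^n is represented by the
  set A \<subseteq> {..<n} of variables set to 1; its Hamming weight is card A.\<close>

type_synonym lit = "nat \<times> bool"
type_synonym clause = "lit set"
type_synonym cnf = "clause set"

definition lit_sat :: "nat set \<Rightarrow> lit \<Rightarrow> bool" where
  "lit_sat A l = ((fst l \<in> A) = snd l)"

definition clause_sat :: "nat set \<Rightarrow> clause \<Rightarrow> bool" where
  "clause_sat A C = (\<exists>l\<in>C. lit_sat A l)"

definition cnf_sat :: "nat set \<Rightarrow> cnf \<Rightarrow> bool" where
  "cnf_sat A F = (\<forall>C\<in>F. clause_sat A C)"

definition is_kcnf :: "nat \<Rightarrow> nat \<Rightarrow> cnf \<Rightarrow> bool" where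
  "is_kcnf n k F = (finite F \<and> (\<forall>C\<in>F. finite C \<and> card C \<le> k \<and> (\<forall>l\<in>C. fst l < n)))"

definition monotone_cnf :: "cnf \<Rightarrow> bool" where
  "monotone_cnf F = (\<forall>C\<in>F. \<forall>l\<in>C. snd l)"

definition sat_t :: "nat \<Rightarrow> nat \<Rightarrow> cnf \<Rightarrow> nat set set" where
  "sat_t n t F = {A. A \<subseteq> {..<n} \<and> card A = t \<and> cnf_sat A F}"

definition admissible :: "nat \<Rightarrow> nat \<Rightarrow> cnf \<Rightarrow> bool" where
  "admissible n t F = (\<forall>A. A \<subseteq> {..<n} \<and> card A < t \<longrightarrow> \<not> cnf_sat A F)"

definition S :: "nat \<Rightarrow> nat \<Rightarrow> nat \<Rightarrow> nat" where
  "S n t k = Max {card (sat_t n t F) | F. is_kcnf n k F \<and> admissible n t F}"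

definition S_mon :: "nat \<Rightarrow> nat \<Rightarrow> nat \<Rightarrow> nat" where
  "S_mon n t k = Max {card (sat_t n t F) | F. is_kcnf n k F \<and> monotone_cnf F \<and> admissible n t F}"

definition F_cov :: "nat \<Rightarrow> nat \<Rightarrow> nat \<Rightarrow> nat" where
  "F_cov n t k = (LEAST q. \<exists>fs :: cnf list. length fs = q \<and> (\<forall>f\<in>set fs. is_kcnf n k f) \<and>
      (\<forall>A. A \<subseteq> {..<n} \<longrightarrow> ((t \<le> card A) = (\<exists>f\<in>set fs. cnf_sat A f))))"

end

theory Submission
  imports Defs "HOL-Combinatorics.Permutations"
begin

text \<open>Lower bound: each of the q formulas is t-admissible (it is false below weight t), so it
  accepts at most S(n,t,k) of the n choose t assignments of weight t, and together they accept
  all of them. Upper bound: take a monotone admissible k-CNF F0 accepting s = S+(n,t,k) such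
  assignments and rename its variables by permutations. A uniformly random permutation maps
  any fixed weight-t set into sat_t(F0) with probability s / (n choose t), so some permutation
  catches at least that fraction of the still uncovered sets. After m \<ge> (n choose t) / s \<cdot> n
  greedy rounds at most (n choose t) (1 - s/(n choose t))^m \<le> (n choose t) e^-n < 1 sets
  remain uncovered. By monotonicity the renamed copies accept everything of weight \<ge> t, and by
  admissibility nothing below.\<close>

subsection \<open>Renaming variables\<close>

definition permute_cnf :: "(nat \<Rightarrow> nat) \<Rightarrow> cnf \<Rightarrow> cnf" where
  "permute_cnf \<sigma> F = (\<lambda>C. (\<lambda>(i, b). (\<sigma> i, b)) ` C) ` F"

lemma cnf_sat_permute_cnf: "cnf_sat A (permute_cnf \<sigma> F) = cnf_sat (\<sigma> -` A) F"
proof -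
  have "clause_sat A ((\<lambda>(i, b). (\<sigma> i, b)) ` C) = clause_sat (\<sigma> -` A) C" for C
    unfolding clause_sat_def lit_sat_def by (simp add: split_beta)
  then show ?thesis unfolding cnf_sat_def permute_cnf_def by simp
qed

lemma is_kcnf_permute_cnf:
  assumes "\<sigma> permutes {..<n}" and "is_kcnf n k F"
  shows "is_kcnf n k (permute_cnf \<sigma> F)"
proof -
  have \<sigma>_lt: "\<sigma> i < n" if "i < n" for i
    using permutes_in_image[OF assms(1)] that by simp
  have "finite C' \<and> card C' \<le> k \<and> (\<forall>l\<in>C'. fst l < n)" if C'_in: "C' \<in> permute_cnf \<sigma> F" for C'
  proof -
    obtain C where C: "C \<in> F" and C': "C' = (\<lambda>(i, b). (\<sigma> i, b)) ` C"
      using C'_in unfolding permute_cnf_def by blast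
    have "finite C" "card C \<le> k" "\<forall>l\<in>C. fst l < n"
      using assms(2) C unfolding is_kcnf_def by auto
    then show ?thesis
      using C' card_image_le[of C "\<lambda>(i, b). (\<sigma> i, b)"] \<sigma>_lt by auto
  qed
  moreover have "finite (permute_cnf \<sigma> F)"
    using assms(2) unfolding is_kcnf_def permute_cnf_def by simp
  ultimately show ?thesis unfolding is_kcnf_def by blast
qed

lemma monotone_cnf_permute_cnf: "monotone_cnf F \<Longrightarrow> monotone_cnf (permute_cnf \<sigma> F)"
  unfolding monotone_cnf_def permute_cnf_def by force

lemma monotone_cnf_sat_mono:
  "monotone_cnf F \<Longrightarrow> B \<subseteq> A \<Longrightarrow> cnf_sat B F \<Longrightarrow> cnf_sat A F"
  unfolding monotone_cnf_def cnf_sat_def clause_sat_def lit_sat_def by fastforce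

lemma permutes_vimage_subset:
  assumes "\<sigma> permutes U" and "A \<subseteq> U"
  shows "\<sigma> -` A \<subseteq> U" and "card (\<sigma> -` A) = card A"
proof -
  show "\<sigma> -` A \<subseteq> U"
    using assms permutes_not_in by fastforce
  have "bij \<sigma>" using permutes_bij[OF assms(1)] .
  then have "\<sigma> ` (\<sigma> -` A) = A" and "inj \<sigma>"
    by (simp_all add: bij_is_surj surj_image_vimage_eq bij_is_inj)
  then show "card (\<sigma> -` A) = card A"
    by (metis card_image inj_on_subset subset_UNIV)
qed

lemma exists_permutes_image:
  assumes "finite U" and "B \<subseteq> U" and "B' \<subseteq> U" and "card B' = card B"
  shows "\<exists>\<tau>. \<tau> permutes U \<and> \<tau> ` B' = B"
proof -
  have fin: "finite B" "finite B'" using assms(1-3) finite_subset by auto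
  obtain f where f: "bij_betw f B' B"
    using finite_same_card_bij[OF fin(2,1) assms(4)] by blast
  have "card (U - B') = card (U - B)"
    using assms fin by (simp add: card_Diff_subset)
  then obtain g where g: "bij_betw g (U - B') (U - B)"
    using finite_same_card_bij assms(1) by blast
  define \<tau> where "\<tau> x = (if x \<in> B' then f x else if x \<in> U then g x else x)" for x
  have "bij_betw \<tau> B' B"
    using f bij_betw_cong[of B' \<tau> f B] by (simp add: \<tau>_def)
  moreover have "bij_betw \<tau> (U - B') (U - B)"
    using g bij_betw_cong[of "U - B'" \<tau> g "U - B"] by (simp add: \<tau>_def)
  ultimately have "bij_betw \<tau> (B' \<union> (U - B')) (B \<union> (U - B))"
    by (rule bij_betw_combine) blast
  then have "bij_betw \<tau> U U"
    using assms(2,3) by (simp add: Un_absorb1)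
  moreover have "\<tau> x = x" if "x \<notin> U" for x
    using that assms(3) by (auto simp: \<tau>_def)
  ultimately have "\<tau> permutes U" by (rule bij_imp_permutes)
  moreover have "\<tau> ` B' = B" using \<open>bij_betw \<tau> B' B\<close> by (simp add: bij_betw_def)
  ultimately show ?thesis by blast
qed

subsection \<open>Permutations acting on the weight-t layer\<close>

definition layer :: "nat \<Rightarrow> nat \<Rightarrow> nat set set" where
  "layer n t = {A. A \<subseteq> {..<n} \<and> card A = t}"

lemma finite_layer: "finite (layer n t)"
  unfolding layer_def by (rule finite_subset[of _ "Pow {..<n}"]) auto

lemma card_layer: "card (layer n t) = n choose t"
  unfolding layer_def using n_subsets[of "{..<n}" t] by simp

lemma sat_t_subset_layer: "sat_t n t F \<subseteq> layer n t"
  unfolding sat_t_def layer_def by auto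

lemma permutes_vimage_layer:
  "\<sigma> permutes {..<n} \<Longrightarrow> A \<in> layer n t \<Longrightarrow> \<sigma> -` A \<in> layer n t"
  unfolding layer_def using permutes_vimage_subset by blast

lemma card_permutes_vimage_eq_mono:
  assumes "A \<in> layer n t" and "B \<in> layer n t" and "B' \<in> layer n t"
  shows "card {\<sigma>. \<sigma> permutes {..<n} \<and> \<sigma> -` A = B}
    \<le> card {\<sigma>. \<sigma> permutes {..<n} \<and> \<sigma> -` A = B'}"
proof -
  obtain \<tau> where \<tau>: "\<tau> permutes {..<n}" "\<tau> ` B' = B"
    using exists_permutes_image[of "{..<n}" B B'] assms(2,3) unfolding layer_def by auto
  have "bij \<tau>" using permutes_bij[OF \<tau>(1)] .
  then have "inj_on (\<lambda>\<sigma>. \<sigma> \<circ> \<tau>) X" for X :: "(nat \<Rightarrow> nat) set"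
    by (intro inj_onI) (metis bij_is_surj comp_assoc comp_id surj_iff)
  moreover have "(\<lambda>\<sigma>. \<sigma> \<circ> \<tau>) ` {\<sigma>. \<sigma> permutes {..<n} \<and> \<sigma> -` A = B}
      \<subseteq> {\<sigma>. \<sigma> permutes {..<n} \<and> \<sigma> -` A = B'}"
  proof (rule image_subsetI)
    fix \<sigma> assume "\<sigma> \<in> {\<sigma>. \<sigma> permutes {..<n} \<and> \<sigma> -` A = B}"
    moreover have "\<tau> -` B = B'"
      using \<tau>(2) \<open>bij \<tau>\<close> by (metis bij_is_inj inj_vimage_image_eq)
    ultimately show "\<sigma> \<circ> \<tau> \<in> {\<sigma>. \<sigma> permutes {..<n} \<and> \<sigma> -` A = B'}"
      using \<tau>(1) by (simp add: permutes_compose flip: vimage_comp)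
  qed
  ultimately show ?thesis
    by (intro card_inj_on_le) (simp_all add: finite_permutations)
qed

lemma card_permutes_vimage_eq:
  assumes "A \<in> layer n t" and "B \<in> layer n t"
  shows "real (card {\<sigma>. \<sigma> permutes {..<n} \<and> \<sigma> -` A = B}) = fact n / real (n choose t)"
proof -
  let ?N = "\<lambda>B. card {\<sigma>. \<sigma> permutes {..<n} \<and> \<sigma> -` A = B}"
  have "fact n = card {\<sigma>. \<sigma> permutes {..<n}}"
    by (simp add: card_permutations)
  also have "{\<sigma>. \<sigma> permutes {..<n}} = (\<Union>B'\<in>layer n t. {\<sigma>. \<sigma> permutes {..<n} \<and> \<sigma> -` A = B'})"
    using permutes_vimage_layer[OF _ assms(1)] by blast
  also have "card \<dots> = (\<Sum>B'\<in>layer n t. ?N B')"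
    by (rule card_UN_disjoint) (auto simp: finite_layer finite_permutations)
  also have "\<dots> = (\<Sum>B'\<in>layer n t. ?N B)"
    by (rule sum.cong) (use card_permutes_vimage_eq_mono assms in \<open>auto intro: antisym\<close>)
  also have "\<dots> = (n choose t) * ?N B"
    by (simp add: card_layer)
  finally have "fact n = real (n choose t) * real (?N B)"
    by (metis of_nat_fact of_nat_mult)
  moreover have "n choose t > 0"
    using assms(2) finite_layer card_layer card_gt_0_iff by (metis empty_iff)
  ultimately show ?thesis by (simp add: field_simps)
qed

lemma exists_permutes_many_hits:
  assumes "U \<subseteq> layer n t" and "X \<subseteq> layer n t"
  shows "\<exists>\<sigma>. \<sigma> permutes {..<n} \<and>
    real (card U) * real (card X) / real (n choose t) \<le> real (card {A\<in>U. \<sigma> -` A \<in> X})"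
proof (rule ccontr)
  define P where "P = {\<sigma>. \<sigma> permutes {..<n}}"
  define c where "c = real (card U) * real (card X) / real (n choose t)"
  have fin: "finite U" "finite X" "finite P"
    using assms by (auto simp: P_def finite_permutations intro: finite_subset[OF _ finite_layer])
  have hits: "real (card {\<sigma>\<in>P. \<sigma> -` A \<in> X}) = real (card X) * (fact n / real (n choose t))"
    if "A \<in> U" for A
  proof -
    have "card {\<sigma>\<in>P. \<sigma> -` A \<in> X} = card (\<Union>B\<in>X. {\<sigma>. \<sigma> permutes {..<n} \<and> \<sigma> -` A = B})"
      unfolding P_def by (rule arg_cong[where f = card]) blast
    also have "\<dots> = (\<Sum>B\<in>X. card {\<sigma>. \<sigma> permutes {..<n} \<and> \<sigma> -` A = B})"
      by (rule card_UN_disjoint) (auto simp: fin finite_permutations)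
    finally have "real (card {\<sigma>\<in>P. \<sigma> -` A \<in> X})
        = (\<Sum>B\<in>X. real (card {\<sigma>. \<sigma> permutes {..<n} \<and> \<sigma> -` A = B}))"
      by simp
    also have "\<dots> = (\<Sum>B\<in>X. fact n / real (n choose t))"
      by (intro sum.cong refl card_permutes_vimage_eq) (use that assms in auto)
    finally show ?thesis by simp
  qed
  have "(\<Sum>\<sigma>\<in>P. real (card {A\<in>U. \<sigma> -` A \<in> X})) = (\<Sum>A\<in>U. real (card {\<sigma>\<in>P. \<sigma> -` A \<in> X}))"
    using sum.swap_restrict[OF fin(3,1), of "\<lambda>_ _. 1::real" "\<lambda>\<sigma> A. \<sigma> -` A \<in> X"] by simp
  also have "\<dots> = (\<Sum>A\<in>U. real (card X) * (fact n / real (n choose t)))"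
    using hits by simp
  also have "\<dots> = real (card P) * c"
    by (simp add: P_def c_def card_permutations)
  finally have "(\<Sum>\<sigma>\<in>P. real (card {A\<in>U. \<sigma> -` A \<in> X})) = real (card P) * c" .
  moreover assume "\<not> ?thesis"
  then have "(\<Sum>\<sigma>\<in>P. real (card {A\<in>U. \<sigma> -` A \<in> X})) < real (card P) * c"
    using fin(3) permutes_id[of "{..<n}"] unfolding P_def c_def
    by (intro sum_bounded_above_strict) (auto simp: card_gt_0_iff intro: permutes_id)
  ultimately show False by simp
qed

subsection \<open>Greedy covering of the layer\<close>

lemma greedy_permutations:
  assumes "X \<subseteq> layer n t"
  shows "\<exists>\<sigma>s. length \<sigma>s = m \<and> (\<forall>\<sigma>\<in>set \<sigma>s. \<sigma> permutes {..<n}) \<and>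
    real (card {A\<in>layer n t. \<forall>\<sigma>\<in>set \<sigma>s. \<sigma> -` A \<notin> X})
      \<le> real (n choose t) * (1 - real (card X) / real (n choose t)) ^ m"
proof (induction m)
  case 0
  show ?case by (intro exI[of _ "[]"]) (simp add: card_layer)
next
  case (Suc m)
  let ?q = "1 - real (card X) / real (n choose t)"
  obtain \<sigma>s where \<sigma>s: "length \<sigma>s = m" "\<forall>\<sigma>\<in>set \<sigma>s. \<sigma> permutes {..<n}"
    and U: "real (card {A\<in>layer n t. \<forall>\<sigma>\<in>set \<sigma>s. \<sigma> -` A \<notin> X}) \<le> real (n choose t) * ?q ^ m"
    using Suc.IH by blast
  define U where "U = {A\<in>layer n t. \<forall>\<sigma>\<in>set \<sigma>s. \<sigma> -` A \<notin> X}"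
  define G where "G \<sigma> = {A\<in>U. \<sigma> -` A \<in> X}" for \<sigma>
  obtain \<sigma> where \<sigma>: "\<sigma> permutes {..<n}"
    and hits: "real (card U) * real (card X) / real (n choose t) \<le> real (card (G \<sigma>))"
    using exists_permutes_many_hits[OF _ assms, of U] unfolding U_def G_def by blast
  have "finite U" unfolding U_def using finite_layer by simp
  have "card X \<le> n choose t"
    using card_mono[OF finite_layer assms] by (simp add: card_layer)
  then have "0 \<le> ?q"
    by (auto simp: divide_le_eq_1)
  have "real (card (U - G \<sigma>)) = real (card U) - real (card (G \<sigma>))"
    using \<open>finite U\<close> by (simp add: G_def card_Diff_subset card_mono of_nat_diff)
  also have "\<dots> \<le> real (card U) * ?q"
    using hits by (simp add: algebra_simps)
  also have "\<dots> \<le> real (n choose t) * ?q ^ m * ?q"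
    using U \<open>0 \<le> ?q\<close> unfolding U_def by (rule mult_right_mono)
  finally have "real (card (U - G \<sigma>)) \<le> real (n choose t) * ?q ^ Suc m"
    by (simp add: mult_ac)
  moreover have "U - G \<sigma> = {A\<in>layer n t. \<forall>\<sigma>'\<in>set (\<sigma> # \<sigma>s). \<sigma>' -` A \<notin> X}"
    unfolding U_def G_def by auto
  ultimately show ?case
    using \<sigma> \<sigma>s by (intro exI[of _ "\<sigma> # \<sigma>s"]) auto
qed

lemma mult_power_one_minus_lt_one:
  fixes c s :: real
  assumes "0 < s" and "s \<le> c" and "c < exp (real n)" and "c / s * real n \<le> real m"
  shows "c * (1 - s / c) ^ m < 1"
proof -
  have "0 < c" using assms(1,2) by linarith
  have "0 \<le> 1 - s / c" using assms(2) \<open>0 < c\<close> by simp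
  then have "(1 - s / c) ^ m \<le> exp (- (s / c)) ^ m"
    using exp_ge_add_one_self[of "- (s / c)"] by (intro power_mono) simp_all
  also have "\<dots> = exp (- (real m * (s / c)))"
    by (simp flip: exp_of_nat_mult)
  also have "\<dots> \<le> exp (- real n)"
  proof -
    have "real n = c / s * real n * (s / c)" using assms(1) \<open>0 < c\<close> by simp
    also have "\<dots> \<le> real m * (s / c)"
      using assms(1,4) \<open>0 < c\<close> by (intro mult_right_mono) simp_all
    finally show ?thesis by simp
  qed
  finally have "c * (1 - s / c) ^ m \<le> c * exp (- real n)"
    using \<open>0 < c\<close> by simp
  also have "\<dots> < exp (real n) * exp (- real n)"
    using assms(3) by simp
  finally show ?thesis by (simp add: exp_minus_inverse)
qed

lemma binomial_lt_exp:
  assumes "1 \<le> n"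
  shows "real (n choose t) < exp (real n)"
proof -
  have "real (n choose t) \<le> 2 ^ n"
    using binomial_le_pow2[of n t] by (metis of_nat_le_iff of_nat_numeral of_nat_power)
  also have "(2::real) ^ n < exp 1 ^ n"
    using exp_1_gt_powr[of 1] assms by (intro power_strict_mono) simp_all
  finally show ?thesis by (simp flip: exp_of_nat_mult)
qed

lemma exists_permutations_covering_layer:
  assumes "1 \<le> n" and "X \<subseteq> layer n t" and "X \<noteq> {}"
    and "real (n choose t) / real (card X) * real n \<le> real m"
  shows "\<exists>\<sigma>s. length \<sigma>s = m \<and> (\<forall>\<sigma>\<in>set \<sigma>s. \<sigma> permutes {..<n}) \<and>
    (\<forall>A\<in>layer n t. \<exists>\<sigma>\<in>set \<sigma>s. \<sigma> -` A \<in> X)"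
proof -
  obtain \<sigma>s where \<sigma>s: "length \<sigma>s = m" "\<forall>\<sigma>\<in>set \<sigma>s. \<sigma> permutes {..<n}"
    and rest: "real (card {A\<in>layer n t. \<forall>\<sigma>\<in>set \<sigma>s. \<sigma> -` A \<notin> X})
      \<le> real (n choose t) * (1 - real (card X) / real (n choose t)) ^ m"
    using greedy_permutations[OF assms(2)] by blast
  have "finite X" using assms(2) finite_layer finite_subset by blast
  then have "0 < card X" using assms(3) by (simp add: card_gt_0_iff)
  moreover have "card X \<le> n choose t"
    using card_mono[OF finite_layer assms(2)] by (simp add: card_layer)
  ultimately have "real (n choose t) * (1 - real (card X) / real (n choose t)) ^ m < 1"
    using binomial_lt_exp[OF assms(1)] assms(4) by (intro mult_power_one_minus_lt_one) simp_all
  with rest have "card {A\<in>layer n t. \<forall>\<sigma>\<in>set \<sigma>s. \<sigma> -` A \<notin> X} = 0"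
    by linarith
  then have "{A\<in>layer n t. \<forall>\<sigma>\<in>set \<sigma>s. \<sigma> -` A \<notin> X} = {}"
    using finite_layer by simp
  then show ?thesis using \<sigma>s by blast
qed

subsection \<open>Threshold covers\<close>

definition thr_cover :: "nat \<Rightarrow> nat \<Rightarrow> nat \<Rightarrow> cnf list \<Rightarrow> bool" where
  "thr_cover n t k fs \<longleftrightarrow> (\<forall>f\<in>set fs. is_kcnf n k f) \<and>
     (\<forall>A. A \<subseteq> {..<n} \<longrightarrow> (t \<le> card A \<longleftrightarrow> (\<exists>f\<in>set fs. cnf_sat A f)))"

lemma F_cov_le_length: "thr_cover n t k fs \<Longrightarrow> F_cov n t k \<le> length fs"
  unfolding F_cov_def thr_cover_def by (rule Least_le) blast

lemma obtain_minimal_thr_cover: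
  assumes "thr_cover n t k fs"
  obtains gs where "thr_cover n t k gs" and "length gs = F_cov n t k"
proof -
  have "\<exists>q gs. length gs = q \<and> thr_cover n t k gs"
    using assms by blast
  from LeastI_ex[OF this] show ?thesis
    using that unfolding F_cov_def thr_cover_def by blast
qed

lemma finite_card_sat_t_values: "finite {card (sat_t n t F) | F. P F}"
proof (rule finite_subset)
  show "{card (sat_t n t F) | F. P F} \<subseteq> {..n choose t}"
    using card_mono[OF finite_layer sat_t_subset_layer] by (auto simp: card_layer)
qed simp

lemma card_sat_t_le_S:
  assumes "is_kcnf n k F" and "admissible n t F"
  shows "card (sat_t n t F) \<le> S n t k"
  unfolding S_def using assms by (intro Max_ge finite_card_sat_t_values) blast

lemma obtain_S_mon_extremal:
  assumes "t \<le> n" and "1 \<le> k"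
  obtains F where "is_kcnf n k F" and "monotone_cnf F" and "admissible n t F"
    and "card (sat_t n t F) = S_mon n t k" and "0 < S_mon n t k"
proof -
  define V where "V = {card (sat_t n t F) | F. is_kcnf n k F \<and> monotone_cnf F \<and> admissible n t F}"
  define W :: cnf where "W = (\<lambda>i. {(i, True)}) ` {..<t}"
  have sat_W: "cnf_sat A W \<longleftrightarrow> {..<t} \<subseteq> A" for A
    unfolding cnf_sat_def clause_sat_def lit_sat_def W_def by auto
  have "admissible n t W"
    unfolding admissible_def sat_W using card_mono[of _ "{..<t}"] finite_subset
    by (metis card_lessThan finite_lessThan not_le)
  moreover have "is_kcnf n k W" "monotone_cnf W"
    using assms unfolding is_kcnf_def monotone_cnf_def W_def by auto
  moreover have "{..<t} \<in> sat_t n t W"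
    unfolding sat_t_def using sat_W assms(1) by auto
  then have "0 < card (sat_t n t W)"
    using finite_subset[OF sat_t_subset_layer finite_layer] card_gt_0_iff by blast
  ultimately have W_val: "card (sat_t n t W) \<in> V" and "0 < card (sat_t n t W)"
    unfolding V_def by blast+
  have "finite V" unfolding V_def by (rule finite_card_sat_t_values)
  then have "S_mon n t k \<in> V" and "card (sat_t n t W) \<le> S_mon n t k"
    unfolding S_mon_def V_def[symmetric] using W_val by (auto intro: Max_in Max_ge)
  then show ?thesis
    using that \<open>0 < card (sat_t n t W)\<close> unfolding V_def by fastforce
qed

lemma thr_cover_permute_cnf:
  assumes "is_kcnf n k F" and "monotone_cnf F" and "admissible n t F"
    and perms: "\<forall>\<sigma>\<in>set \<sigma>s. \<sigma> permutes {..<n}"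
    and covers: "\<forall>A\<in>layer n t. \<exists>\<sigma>\<in>set \<sigma>s. \<sigma> -` A \<in> sat_t n t F"
  shows "thr_cover n t k (map (\<lambda>\<sigma>. permute_cnf \<sigma> F) \<sigma>s)"
  unfolding thr_cover_def
proof (intro conjI allI impI iffI)
  show "\<forall>f\<in>set (map (\<lambda>\<sigma>. permute_cnf \<sigma> F) \<sigma>s). is_kcnf n k f"
    using perms assms(1) is_kcnf_permute_cnf by auto
next
  fix A assume "A \<subseteq> {..<n}" and "t \<le> card A"
  then obtain B where "B \<subseteq> A" and "card B = t"
    by (meson obtain_subset_with_card_n)
  then have "B \<in> layer n t" using \<open>A \<subseteq> {..<n}\<close> unfolding layer_def by auto
  then obtain \<sigma> where "\<sigma> \<in> set \<sigma>s" and "cnf_sat B (permute_cnf \<sigma> F)"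
    using covers unfolding sat_t_def by (auto simp: cnf_sat_permute_cnf)
  then show "\<exists>f\<in>set (map (\<lambda>\<sigma>. permute_cnf \<sigma> F) \<sigma>s). cnf_sat A f"
    using monotone_cnf_sat_mono[OF monotone_cnf_permute_cnf[OF assms(2)] \<open>B \<subseteq> A\<close>] by auto
next
  fix A assume "A \<subseteq> {..<n}" and "\<exists>f\<in>set (map (\<lambda>\<sigma>. permute_cnf \<sigma> F) \<sigma>s). cnf_sat A f"
  then obtain \<sigma> where "\<sigma> permutes {..<n}" and "cnf_sat (\<sigma> -` A) F"
    using perms by (auto simp: cnf_sat_permute_cnf)
  then show "t \<le> card A"
    using assms(3) permutes_vimage_subset[OF _ \<open>A \<subseteq> {..<n}\<close>] unfolding admissible_def
    by (metis not_le)
qed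

lemma exists_short_thr_cover:
  assumes "1 \<le> n" and "t \<le> n" and "1 \<le> k"
  shows "\<exists>fs. thr_cover n t k fs \<and>
    length fs = nat \<lceil>real (n choose t) / real (S_mon n t k) * real n\<rceil>"
proof -
  obtain F where F: "is_kcnf n k F" "monotone_cnf F" "admissible n t F"
    and card_F: "card (sat_t n t F) = S_mon n t k" and "0 < S_mon n t k"
    using obtain_S_mon_extremal[OF assms(2,3)] .
  then have "sat_t n t F \<noteq> {}" by auto
  then obtain \<sigma>s where "length \<sigma>s = nat \<lceil>real (n choose t) / real (S_mon n t k) * real n\<rceil>"
    and "\<forall>\<sigma>\<in>set \<sigma>s. \<sigma> permutes {..<n}" "\<forall>A\<in>layer n t. \<exists>\<sigma>\<in>set \<sigma>s. \<sigma> -` A \<in> sat_t n t F"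
    using exists_permutations_covering_layer[OF assms(1) sat_t_subset_layer] card_F
    by (metis nat_ceiling_le_eq order_refl)
  then show ?thesis
    using thr_cover_permute_cnf[OF F] by (metis length_map)
qed

lemma binomial_le_length_mult_S:
  assumes "thr_cover n t k fs"
  shows "n choose t \<le> length fs * S n t k"
proof -
  have "layer n t \<subseteq> (\<Union>f\<in>set fs. sat_t n t f)"
    using assms unfolding thr_cover_def layer_def sat_t_def by auto
  then have "n choose t \<le> card (\<Union>f\<in>set fs. sat_t n t f)"
    unfolding card_layer[symmetric]
    by (intro card_mono) (auto intro: finite_subset[OF sat_t_subset_layer finite_layer])
  also have "\<dots> \<le> (\<Sum>f\<in>set fs. card (sat_t n t f))"
    by (rule card_UN_le) simp
  also have "\<dots> \<le> card (set fs) * S n t k"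
  proof -
    have "card (sat_t n t f) \<le> S n t k" if "f \<in> set fs" for f
    proof (rule card_sat_t_le_S)
      show "is_kcnf n k f" using assms that unfolding thr_cover_def by blast
      show "admissible n t f" using assms that unfolding thr_cover_def admissible_def by (metis not_le)
    qed
    then show ?thesis
      using sum_bounded_above[of "set fs" "\<lambda>f. card (sat_t n t f)" "S n t k"] by simp
  qed
  also have "\<dots> \<le> length fs * S n t k"
    by (simp add: card_length)
  finally show ?thesis .
qed

theorem mainTheorem3:
  fixes n t k :: nat
  assumes "n \<ge> 1" and "t \<le> n" and "k \<ge> 1"
  shows "real (n choose t) / real (S n t k) \<le> real (F_cov n t k)
     \<and> int (F_cov n t k) \<le> \<lceil>real (n choose t) / real (S_mon n t k) * real n\<rceil>"
proof
  obtain fs where fs: "thr_cover n t k fs"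
    and len: "length fs = nat \<lceil>real (n choose t) / real (S_mon n t k) * real n\<rceil>"
    using exists_short_thr_cover[OF assms] by blast
  obtain gs where "thr_cover n t k gs" and "length gs = F_cov n t k"
    using obtain_minimal_thr_cover[OF fs] .
  then have "real (n choose t) \<le> real (F_cov n t k) * real (S n t k)"
    using binomial_le_length_mult_S by (metis of_nat_le_iff of_nat_mult)
  then show "real (n choose t) / real (S n t k) \<le> real (F_cov n t k)"
    by (cases "S n t k = 0") (simp_all add: divide_le_eq)
  show "int (F_cov n t k) \<le> \<lceil>real (n choose t) / real (S_mon n t k) * real n\<rceil>"
  proof -
    have "0 \<le> real (n choose t) / real (S_mon n t k) * real n"
      by simp
    from ceiling_mono[OF this]
    have "0 \<le> \<lceil>real (n choose t) / real (S_mon n t k) * real n\<rceil>"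
      by simp
    then have "int (length fs) = \<lceil>real (n choose t) / real (S_mon n t k) * real n\<rceil>"
      using len by simp
    then show ?thesis using F_cov_le_length[OF fs] by linarith
  qed
qed

end
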